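(* Let $N\ge 1$ be an integer, and let $1\le r\le N+1$ and $0\le i\le r$ be integers. Then \[ a^{(\lambda)}_{i,r-i}(N+1,x)=(-1)^{N+1+i-r}\, i!\, S_{1,i-1}(r-i)\, N!\, H_{N,r-1}\,(x)_{r-i}. \]
   Context: Let $x$ be a variable. $(x)_0=1$ and $(x)_n=x(x-1)\cdots(x-n+1)$ for $n\ge1$ (falling factorial). Generalized harmonic numbers: $H_{N,0}=1$ for all integers $N\ge 0$; $H_{N,1}=1+\frac12+\cdots+\frac1N$ for $N\ge1$; and for $2\le j\le N$, \[H_{N,j}=\frac{H_{N-1,j-1}}{N}+\frac{H_{N-2,j-1}}{N-1}+\cdots+\frac{H_{j-1,j-1}}{j}.\] Generalized Changhee power sums (for $k=1$), for integers $N\ge0$: $S_{1,-1}(N)=1$, $S_{1,0}(N)=N+1$, $S_{1,j}(N)=\sum_{l=0}^{N}S_{1,j-1}(l)$ for $j\ge1$. The coefficients $a^{(\lambda)}_{i,j}(N,x)$ (polynomials in $x$, indexed by integers $N\ge1$ and $i,j\ge0$ with $1\le i+j\le N$) are defined recursively by $a^{(\lambda)}_{1,0}(1,x)=-1$, $a^{(\lambda)}_{0,1}(1,x)=x$, and for $N\ge1$, $i,j\ge0$, $1\le i+j\le N+1$: \[ a^{(\lambda)}_{i,j}(N+1,x)=-N\,a^{(\lambda)}_{i,j}(N,x)-i\,a^{(\lambda)}_{i-1,j}(N,x)+(x-j+1)\,a^{(\lambda)}_{i,j-1}(N,x), \] with the convention that $a^{(\lambda)}_{i,j}(N,x)=0$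 whenever $i<0$, $j<0$, $i+j=0$, or $i+j>N$. (These are exactly the coefficients arising from repeatedly differentiating $F(t;x,\lambda)=\frac{2\lambda}{2\lambda+\log(1+\lambda t)}\bigl(1+\lambda^{-1}\log(1+\lambda t)\bigr)^x$ in the form $F^{(N)}=\lambda^N(1+\lambda t)^{-N}\sum_{1\le i+j\le N}a^{(\lambda)}_{i,j}(N,x)(2\lambda+\log(1+\lambda t))^{-i}(\lambda+\log(1+\lambda t))^{-j}F$.) *)

theory Defs
  imports Complex_Main
begin

definition falling :: "real \<Rightarrow> nat \<Rightarrow> real" where
  "falling x n = (\<Prod>k<n. x - of_nat k)"

text \<open>Generalized harmonic numbers H_{N,j}: H_{N,0} = 1 and
  H_{N,j+1} = sum_{m=j}^{N-1} H_{m,j}/(m+1) (this gives H_{N,1} = 1 + ... + 1/N).\<close>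
fun genH :: "nat \<Rightarrow> nat \<Rightarrow> real" where
  "genH N 0 = 1"
| "genH N (Suc j) = (\<Sum>m = j..<N. genH m j / of_nat (m + 1))"

text \<open>Shifted Changhee sums: Saux k n = S_{1,k-1}(n).\<close>
fun Saux :: "nat \<Rightarrow> nat \<Rightarrow> real" where
  "Saux 0 n = 1"
| "Saux (Suc k) n = (\<Sum>l = 0..n. Saux k l)"

definition S1 :: "int \<Rightarrow> nat \<Rightarrow> real" where
  "S1 j n = Saux (nat (j + 1)) n"

text \<open>Coefficients a_{i,j}(N,x); the value for N = 0 is a convention (never used).\<close>
fun acoef :: "nat \<Rightarrow> nat \<Rightarrow> nat \<Rightarrow> real \<Rightarrow> real" where
  "acoef 0 i j x = 0"
| "acoef (Suc 0) i j x =
     (if i = 1 \<and> j = 0 then -1 else if i = 0 \<and> j = 1 then x else 0)"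
| "acoef (Suc (Suc n)) i j x =
     (if i + j = 0 \<or> i + j > n + 2 then 0
      else - of_nat (n + 1) * acoef (Suc n) i j x
           - (if i > 0 then of_nat i * acoef (Suc n) (i - 1) j x else 0)
           + (if j > 0 then (x - of_nat j + 1) * acoef (Suc n) i (j - 1) x else 0))"

end

theory Submission
  imports Defs "HOL-Combinatorics.Stirling"
begin

text \<open>The recursion for the coefficients is solved by
  \[a_{i,j}(M,x) = (-1)^{M+j}\, i!\binom{i+j}{i} {M \brack i+j} (x)_j,\]
  where \({M \brack k}\) are the unsigned Stirling numbers of the first kind: the factor
  \(-M\) and the shift \(i-1\) or \(j-1\) of the recursion combine, through Pascal's rule
  and \((x-j+1)(x)_{j-1} = (x)_j\), into the Stirling recurrence
  \({M+1 \brack k+1} = M {M \brack k+1} + {M \brack k}\).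
  The theorem follows because \(N!\,H_{N,k} = {N+1 \brack k+1}\) and
  \(S_{1,i-1}(n) = \binom{n+i}{i}\).\<close>

lemma genH_eq_0: "N < k \<Longrightarrow> genH N k = 0"
  by (cases k) auto

lemma genH_Suc_Suc:
  "genH (Suc N) (Suc k) = genH N (Suc k) + genH N k / of_nat (Suc N)"
proof (cases "k \<le> N")
  case True
  then show ?thesis by (simp add: sum.atLeastLessThan_Suc)
qed (simp add: genH_eq_0)

lemma fact_mult_genH: "fact N * genH N k = of_nat (stirling (Suc N) (Suc k))"
proof (induction N arbitrary: k)
  case 0
  then show ?case by (cases k) auto
next
  case (Suc N)
  show ?case
  proof (cases k)
    case 0
    then show ?thesis by (simp add: stirling_Suc_n_1 algebra_simps del: stirling.simps)
  next
    case (Suc k')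
    have "fact (Suc N) * genH (Suc N) k
        = of_nat (Suc N) * (fact N * genH N (Suc k')) + fact N * genH N k'"
      by (simp add: Suc genH_Suc_Suc field_simps del: genH.simps)
    also have "\<dots> = of_nat (Suc N * stirling (Suc N) (Suc k) + stirling (Suc N) k)"
      by (simp only: Suc Suc.IH of_nat_add of_nat_mult)
    also have "\<dots> = of_nat (stirling (Suc (Suc N)) (Suc k))"
      by (simp only: stirling.simps(4))
    finally show ?thesis .
  qed
qed

lemma Saux_eq_binomial: "Saux k n = of_nat (n + k choose k)"
proof (induction k arbitrary: n)
  case (Suc k)
  note IH_k = Suc.IH
  show ?case
  proof (induction n)
    case (Suc n)
    then show ?case by (simp add: IH_k add.commute)
  qed (simp add: IH_k)
qed simp

lemma falling_Suc: "falling x (Suc j) = falling x j * (x - of_nat j)"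
  by (simp add: falling_def)

lemma fact_mult_binomial_pascal:
  assumes "0 < i + j"
  shows "fact i * (i + j choose i) =
    (if 0 < i then i * (fact (i - 1) * (i - 1 + j choose (i - 1))) else 0)
    + (if 0 < j then fact i * (i + (j - 1) choose i) else 0)"
  using assms by (cases i; cases j) (auto simp: algebra_simps)

text \<open>For \<open>M \<ge> 1\<close> this vanishes at \<open>i + j = 0\<close> and for \<open>i + j > M\<close>, so it matches
  the boundary conventions of \<open>acoef\<close> without any case distinction in the recursion.\<close>
definition acoef_closed :: "nat \<Rightarrow> nat \<Rightarrow> nat \<Rightarrow> real \<Rightarrow> real" where
  "acoef_closed M i j x =
    (-1) ^ (M + j) * of_nat (fact i * (i + j choose i)) * of_nat (stirling M (i + j))
      * falling x j"

lemma acoef_closed_Suc: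
  "acoef_closed (Suc M) i j x =
    - of_nat M * acoef_closed M i j x
    - (if 0 < i then of_nat i * acoef_closed M (i - 1) j x else 0)
    + (if 0 < j then (x - of_nat j + 1) * acoef_closed M i (j - 1) x else 0)"
proof (cases "i + j")
  case 0
  then show ?thesis by (cases M) (simp_all add: acoef_closed_def)
next
  case (Suc k)
  define c where "c = (-1) ^ (M + j) * falling x j"
  define b where "b i' j' = (of_nat (fact i' * (i' + j' choose i')) :: real)" for i' j'
  have shift_i: "(if 0 < i then of_nat i * acoef_closed M (i - 1) j x else 0)
      = c * (if 0 < i then of_nat i * b (i - 1) j else 0) * of_nat (stirling M k)"
    using Suc by (simp add: acoef_closed_def c_def b_def)
  have shift_j: "(if 0 < j then (x - of_nat j + 1) * acoef_closed M i (j - 1) x else 0)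
      = - c * (if 0 < j then b i (j - 1) else 0) * of_nat (stirling M k)"
  proof (cases j)
    case (Suc j')
    then show ?thesis
      using \<open>i + j = Suc k\<close>
      by (simp add: acoef_closed_def c_def b_def falling_Suc algebra_simps)
  qed simp
  have pascal: "b i j = (if 0 < i then of_nat i * b (i - 1) j else 0)
      + (if 0 < j then b i (j - 1) else 0)"
    using fact_mult_binomial_pascal[of i j] Suc unfolding b_def
    by (simp only: of_nat_add of_nat_mult) auto
  have "acoef_closed (Suc M) i j x
      = - c * b i j * (of_nat M * of_nat (stirling M (Suc k)) + of_nat (stirling M k))"
    using Suc by (simp add: acoef_closed_def c_def b_def)
  also have "\<dots> = - of_nat M * acoef_closed M i j x - c * b i j * of_nat (stirling M k)"
    using Suc by (simp add: acoef_closed_def c_def b_def algebra_simps)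
  finally show ?thesis
    unfolding shift_i shift_j by (subst (asm) pascal) (simp add: algebra_simps)
qed

lemma acoef_eq_closed: "1 \<le> M \<Longrightarrow> acoef M i j x = acoef_closed M i j x"
proof (induction M arbitrary: i j rule: nat_induct_at_least)
  case base
  have "i + j = 0 \<or> 1 < i + j \<or> (i = 1 \<and> j = 0) \<or> (i = 0 \<and> j = 1)" by auto
  then show ?case by (auto simp: acoef_closed_def falling_def)
next
  case (Suc M)
  then obtain n where M: "M = Suc n" by (cases M) auto
  show ?case
  proof (cases "i + j = 0 \<or> M + 1 < i + j")
    case True
    then show ?thesis by (auto simp: M acoef_closed_def)
  next
    case False
    then have "acoef (Suc M) i j x = - of_nat M * acoef M i j x
        - (if 0 < i then of_nat i * acoef M (i - 1) j x else 0)
        + (if 0 < j then (x - of_nat j + 1) * acoef M i (j - 1) x else 0)"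
      by (auto simp: M)
    then show ?thesis by (simp add: Suc.IH acoef_closed_Suc)
  qed
qed

theorem theorem2:
  fixes N r i :: nat and x :: real
  assumes "N \<ge> 1" and "1 \<le> r" and "r \<le> N + 1" and "i \<le> r"
  shows "acoef (N + 1) i (r - i) x =
    (-1) ^ (N + 1 + i - r) * fact i * S1 (int i - 1) (r - i) * fact N
      * genH N (r - 1) * falling x (r - i)"
proof -
  define d where "d = r - i"
  have r: "r = i + d" and r': "r = Suc (r - 1)" using assms d_def by auto
  have sign: "(-1) ^ (N + 1 + d) = ((-1) ^ (N + 1 + i - r) :: real)"
  proof -
    have "N + 1 + d = (N + 1 + i - r) + 2 * d" using assms r by simp
    then have "(-1) ^ (N + 1 + d) = ((-1) ^ (N + 1 + i - r) :: real) * ((-1) ^ 2) ^ d"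
      by (simp only: power_add power_mult)
    then show ?thesis by simp
  qed
  have S1_eq: "S1 (int i - 1) d = of_nat (i + d choose i)"
    by (simp add: S1_def Saux_eq_binomial add.commute)
  have genH_eq: "fact N * genH N (r - 1) = of_nat (stirling (N + 1) (i + d))"
    using r r' fact_mult_genH[of N "r - 1"] by simp
  have "acoef (N + 1) i d x = (-1) ^ (N + 1 + d) * fact i * of_nat (i + d choose i)
      * of_nat (stirling (N + 1) (i + d)) * falling x d"
    using acoef_eq_closed[of "N + 1" i d x] by (simp add: acoef_closed_def)
  then show ?thesis
    unfolding d_def[symmetric] sign S1_eq mult.assoc genH_eq by simp
qed

end
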